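(* Let $D$ be a semi-complete digraph containing $\overleftrightarrow{S_4}$ as a subdigraph. Then $D$ is $3$-dicritical if and only if $D$ is isomorphic to $\vec{W_3}$.
   Context: A digraph is semi-complete if every two distinct vertices are joined by at least one arc. A $2$-dicolouring is a map to $\{1,2\}$ whose colour classes induce acyclic subdigraphs. $D$ is $3$-dicritical if $D$ has no $2$-dicolouring but every proper subdigraph has one. $\overleftrightarrow{S_4}$ is the bidirected star on 4 vertices: a vertex $r$ joined by a digon (both arcs) to each of three other vertices, with no other arcs. $\vec{W_3}$ consists of a directed triangle $a\to b\to c\to a$ and a vertex $r$ joined by a digon to each of $a,b,c$. Subdigraph containment is up to isomorphism. *)

theory Defs
  imports Main
begin

text \<open>A digraph is a pair (V, A): a finite vertex set and a loopless arc relation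
  on V (no parallel arcs; digons allowed).\<close>

definition digraph :: "'a set \<Rightarrow> ('a \<times> 'a) set \<Rightarrow> bool" where
  "digraph V A \<longleftrightarrow> finite V \<and> A \<subseteq> V \<times> V \<and> (\<forall>v. (v, v) \<notin> A)"

definition semicomplete :: "'a set \<Rightarrow> ('a \<times> 'a) set \<Rightarrow> bool" where
  "semicomplete V A \<longleftrightarrow>
     (\<forall>u\<in>V. \<forall>v\<in>V. u \<noteq> v \<longrightarrow> (u, v) \<in> A \<or> (v, u) \<in> A)"

definition induced_arcs :: "('a \<times> 'a) set \<Rightarrow> 'a set \<Rightarrow> ('a \<times> 'a) set" where
  "induced_arcs A X = A \<inter> (X \<times> X)"

definition two_dicolouring :: "'a set \<Rightarrow> ('a \<times> 'a) set \<Rightarrow> ('a \<Rightarrow> nat) \<Rightarrow> bool" where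
  "two_dicolouring V A c \<longleftrightarrow>
     (\<forall>v\<in>V. c v \<in> {1, 2}) \<and>
     (\<forall>i\<in>{1::nat, 2}. acyclic (induced_arcs A {v \<in> V. c v = i}))"

definition two_dicolourable :: "'a set \<Rightarrow> ('a \<times> 'a) set \<Rightarrow> bool" where
  "two_dicolourable V A \<longleftrightarrow> (\<exists>c. two_dicolouring V A c)"

definition subdigraph :: "'a set \<Rightarrow> ('a \<times> 'a) set \<Rightarrow> 'a set \<Rightarrow> ('a \<times> 'a) set \<Rightarrow> bool" where
  "subdigraph V' A' V A \<longleftrightarrow> V' \<subseteq> V \<and> A' \<subseteq> A \<and> A' \<subseteq> V' \<times> V'"

definition three_dicritical :: "'a set \<Rightarrow> ('a \<times> 'a) set \<Rightarrow> bool" where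
  "three_dicritical V A \<longleftrightarrow>
     \<not> two_dicolourable V A \<and>
     (\<forall>V' A'. subdigraph V' A' V A \<and> (V', A') \<noteq> (V, A) \<longrightarrow> two_dicolourable V' A')"

definition contains_subdigraph ::
    "'a set \<Rightarrow> ('a \<times> 'a) set \<Rightarrow> 'b set \<Rightarrow> ('b \<times> 'b) set \<Rightarrow> bool" where
  "contains_subdigraph V A W B \<longleftrightarrow>
     (\<exists>f. inj_on f W \<and> f ` W \<subseteq> V \<and> (\<forall>(x, y)\<in>B. (f x, f y) \<in> A))"

definition isomorphic ::
    "'a set \<Rightarrow> ('a \<times> 'a) set \<Rightarrow> 'b set \<Rightarrow> ('b \<times> 'b) set \<Rightarrow> bool" where
  "isomorphic V A W B \<longleftrightarrow>
     (\<exists>f. bij_betw f V W \<and> (\<forall>x\<in>V. \<forall>y\<in>V. (x, y) \<in> A \<longleftrightarrow> (f x, f y) \<in> B))"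

definition S4_V :: "nat set" where "S4_V = {0, 1, 2, 3}"
definition S4_A :: "(nat \<times> nat) set" where
  "S4_A = {(0,1),(1,0),(0,2),(2,0),(0,3),(3,0)}"

definition W3_V :: "nat set" where "W3_V = {0, 1, 2, 3}"
definition W3_A :: "(nat \<times> nat) set" where
  "W3_A = {(1,2),(2,3),(3,1),(0,1),(1,0),(0,2),(2,0),(0,3),(3,0)}"

end

theory Submission
  imports Defs
begin

text \<open>W3 is not 2-dicolourable: the three digon neighbours of its centre all
  receive the colour the centre does not have, and they span a directed triangle.
  Deleting any single arc of W3 makes it 2-dicolourable, so it is
  3-dicritical, and 3-dicriticality is invariant under isomorphism.

  Conversely, let D be 3-dicritical and let r be the centre of a copy of the
  bidirected star with leaves a, b, c. The leaves cannot span a transitive triangle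
  x -> y -> z, x -> z: a 2-dicolouring of D - xz gives x, y, z one colour (each
  differs from the colour of r), and since the path x -> y -> z is monochromatic,
  putting xz back creates no monochromatic cycle. As D is semi-complete, a, b, c
  therefore span a directed triangle, so D contains W3; the copy is not
  2-dicolourable, hence by criticality it is all of D.\<close>

abbreviation digon :: "('a \<times> 'a) set \<Rightarrow> 'a \<Rightarrow> 'a \<Rightarrow> bool" where
  "digon A u v \<equiv> (u, v) \<in> A \<and> (v, u) \<in> A"

lemma acyclic_hom:
  assumes "acyclic S" and hom: "map_prod f f ` R \<subseteq> S"
  shows "acyclic R"
proof -
  have "(f u, f v) \<in> S\<^sup>+" if "(u, v) \<in> R\<^sup>+" for u v
    using that by (induction rule: trancl_induct) (use hom in \<open>auto intro: trancl_into_trancl\<close>)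
  then show ?thesis
    using \<open>acyclic S\<close> unfolding acyclic_def by blast
qed

lemma two_dicolouring_hom:
  assumes col: "two_dicolouring W B c" and "f ` V \<subseteq> W" and hom: "map_prod f f ` A \<subseteq> B"
  shows "two_dicolouring V A (c \<circ> f)"
  unfolding two_dicolouring_def
proof (intro conjI ballI)
  fix v assume "v \<in> V"
  then show "(c \<circ> f) v \<in> {1, 2}"
    using col \<open>f ` V \<subseteq> W\<close> unfolding two_dicolouring_def by auto
next
  fix i :: nat assume "i \<in> {1, 2}"
  then have "acyclic (induced_arcs B {w \<in> W. c w = i})"
    using col unfolding two_dicolouring_def by blast
  moreover have "map_prod f f ` induced_arcs A {v \<in> V. (c \<circ> f) v = i}
      \<subseteq> induced_arcs B {w \<in> W. c w = i}"
    using \<open>f ` V \<subseteq> W\<close> hom by (auto simp: induced_arcs_def)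
  ultimately show "acyclic (induced_arcs A {v \<in> V. (c \<circ> f) v = i})"
    by (rule acyclic_hom)
qed

lemma two_dicolourable_hom:
  assumes "two_dicolourable W B" and "f ` V \<subseteq> W" and "map_prod f f ` A \<subseteq> B"
  shows "two_dicolourable V A"
  using assms two_dicolouring_hom unfolding two_dicolourable_def by metis

lemma two_dicolourable_subdigraph:
  "two_dicolourable V A \<Longrightarrow> subdigraph V' A' V A \<Longrightarrow> two_dicolourable V' A'"
  by (rule two_dicolourable_hom[where f = id]) (auto simp: subdigraph_def)

lemma isomorphic_sym:
  assumes "isomorphic V A W B"
  shows "isomorphic W B V A"
proof -
  obtain f where bij: "bij_betw f V W" and arcs: "\<forall>x\<in>V. \<forall>y\<in>V. (x, y) \<in> A \<longleftrightarrow> (f x, f y) \<in> B"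
    using assms unfolding isomorphic_def by blast
  let ?g = "inv_into V f"
  have "(x, y) \<in> B \<longleftrightarrow> (?g x, ?g y) \<in> A" if "x \<in> W" "y \<in> W" for x y
    using arcs that bij bij_betw_imp_surj_on bij_betwE[OF bij_betw_inv_into[OF bij]] f_inv_into_f
    by metis
  then show ?thesis
    unfolding isomorphic_def using bij_betw_inv_into[OF bij] by blast
qed

lemma isomorphic_imageE:
  assumes "isomorphic V A W B" and "A \<subseteq> V \<times> V" "B \<subseteq> W \<times> W"
  obtains f where "inj_on f V" "f ` V = W" "map_prod f f ` A = B"
proof -
  obtain f where bij: "bij_betw f V W" and arcs: "\<forall>x\<in>V. \<forall>y\<in>V. (x, y) \<in> A \<longleftrightarrow> (f x, f y) \<in> B"
    using assms(1) unfolding isomorphic_def by blast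
  have "map_prod f f ` A = B"
  proof
    show "map_prod f f ` A \<subseteq> B" using arcs assms(2) by auto
    show "B \<subseteq> map_prod f f ` A"
    proof
      fix e assume "e \<in> B"
      then obtain u v where "u \<in> V" "v \<in> V" "e = (f u, f v)"
        using assms(3) bij unfolding bij_betw_def by blast
      then show "e \<in> map_prod f f ` A" using arcs \<open>e \<in> B\<close> by force
    qed
  qed
  then show thesis using that bij unfolding bij_betw_def by blast
qed

lemma three_dicritical_isomorphic:
  assumes iso: "isomorphic V A W B" and AV: "A \<subseteq> V \<times> V" and BW: "B \<subseteq> W \<times> W"
    and crit: "three_dicritical W B"
  shows "three_dicritical V A"
  unfolding three_dicritical_def
proof (intro conjI allI impI)
  obtain g where "g ` W = V" "map_prod g g ` B = A"
    using isomorphic_imageE[OF isomorphic_sym[OF iso] BW AV] by metis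
  moreover have "\<not> two_dicolourable W B"
    using crit unfolding three_dicritical_def by blast
  ultimately show "\<not> two_dicolourable V A"
    using two_dicolourable_hom[of V A g W B] by blast
next
  fix V' A' assume "subdigraph V' A' V A \<and> (V', A') \<noteq> (V, A)"
  then have sub: "V' \<subseteq> V" "A' \<subseteq> A" "A' \<subseteq> V' \<times> V'" and proper: "(V', A') \<noteq> (V, A)"
    unfolding subdigraph_def by auto
  obtain f where inj: "inj_on f V" and fV: "f ` V = W" and fA: "map_prod f f ` A = B"
    using isomorphic_imageE[OF iso AV BW] by metis
  have inj_arcs: "inj_on (map_prod f f) (V \<times> V)"
    using map_prod_inj_on[OF inj inj] .
  have "(f ` V', map_prod f f ` A') \<noteq> (W, B)"
  proof
    assume "(f ` V', map_prod f f ` A') = (W, B)"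
    then have "f ` V' = f ` V" "map_prod f f ` A' = map_prod f f ` A"
      using fV fA by auto
    then have "V' = V" "A' = A"
      using inj_on_image_eq_iff[OF inj sub(1) order_refl]
        inj_on_image_eq_iff[OF inj_arcs subset_trans[OF sub(2) AV] AV] by simp_all
    with proper show False by blast
  qed
  moreover have "subdigraph (f ` V') (map_prod f f ` A') W B"
    using sub fV fA unfolding subdigraph_def by blast
  ultimately have "two_dicolourable (f ` V') (map_prod f f ` A')"
    using crit unfolding three_dicritical_def by blast
  then show "two_dicolourable V' A'"
    by (rule two_dicolourable_hom) (rule order_refl)+
qed

lemma three_dicritical_isomorphic_if_contains:
  assumes crit: "three_dicritical V A" and "contains_subdigraph V A W B"
    and not_col: "\<not> two_dicolourable W B" and BW: "B \<subseteq> W \<times> W"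
  shows "isomorphic V A W B"
proof -
  obtain f where inj: "inj_on f W" and "f ` W \<subseteq> V" and hom: "map_prod f f ` B \<subseteq> A"
    using assms(2) unfolding contains_subdigraph_def by fastforce
  have "subdigraph (f ` W) (map_prod f f ` B) V A"
    using \<open>f ` W \<subseteq> V\<close> hom BW unfolding subdigraph_def by auto
  moreover have "\<not> two_dicolourable (f ` W) (map_prod f f ` B)"
    using not_col two_dicolourable_hom[of "f ` W" "map_prod f f ` B" f W B] by blast
  ultimately have img: "f ` W = V" "map_prod f f ` B = A"
    using crit unfolding three_dicritical_def by blast+
  have "(x, y) \<in> B \<longleftrightarrow> (f x, f y) \<in> A" if "x \<in> W" "y \<in> W" for x y
    using inj_on_image_mem_iff[OF map_prod_inj_on[OF inj inj], of "(x, y)" B] that BW img(2)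
    by simp
  then have "isomorphic W B V A"
    unfolding isomorphic_def using inj img(1) by (auto simp: bij_betw_def)
  then show ?thesis by (rule isomorphic_sym)
qed

lemma two_dicolourable_if_ranked:
  fixes c h :: "'a \<Rightarrow> nat"
  assumes "\<forall>v\<in>V. c v \<in> {1, 2}" and "\<forall>(u, v)\<in>A. c u = c v \<longrightarrow> h u < h v"
  shows "two_dicolourable V A"
  unfolding two_dicolourable_def two_dicolouring_def
proof (intro exI conjI ballI)
  fix i :: nat
  have "induced_arcs A {v \<in> V. c v = i} \<subseteq> measure h"
    using assms(2) by (auto simp: induced_arcs_def)
  then show "acyclic (induced_arcs A {v \<in> V. c v = i})"
    by (rule wf_acyclic[OF wf_subset[OF wf_measure]])
qed (use assms(1) in blast)

lemma two_dicolouring_class_acyclic: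
  "two_dicolouring V A c \<Longrightarrow> v \<in> V \<Longrightarrow> acyclic (induced_arcs A {w \<in> V. c w = c v})"
  unfolding two_dicolouring_def by auto

lemma two_dicolouring_digon:
  assumes col: "two_dicolouring V A c" and "u \<in> V" "v \<in> V" "digon A u v"
  shows "c u \<noteq> c v"
proof
  assume "c u = c v"
  let ?R = "induced_arcs A {w \<in> V. c w = c u}"
  have "(u, v) \<in> ?R" "(v, u) \<in> ?R"
    using assms \<open>c u = c v\<close> by (auto simp: induced_arcs_def)
  then have "(u, u) \<in> ?R\<^sup>+" by (rule r_r_into_trancl)
  with two_dicolouring_class_acyclic[OF col \<open>u \<in> V\<close>] show False
    unfolding acyclic_def by blast
qed

lemma two_dicolouring_digon_neighbours:
  assumes col: "two_dicolouring V A c" and "r \<in> V" "x \<in> V" "y \<in> V"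
    and "digon A r x" "digon A r y"
  shows "c x = c y"
proof -
  have "c x \<noteq> c r" "c y \<noteq> c r"
    using two_dicolouring_digon[OF col] assms(2-6) by metis+
  moreover have "c r \<in> {1, 2}" "c x \<in> {1, 2}" "c y \<in> {1, 2}"
    using col assms(2-4) unfolding two_dicolouring_def by auto
  ultimately show ?thesis by auto
qed

lemma two_dicolouring_insert_shortcut:
  assumes col: "two_dicolouring V A c" and "(x, y) \<in> A" "(y, z) \<in> A"
    and "x \<in> V" "y \<in> V" "z \<in> V" and "c y = c x" "c z = c x"
  shows "two_dicolouring V (insert (x, z) A) c"
  unfolding two_dicolouring_def
proof (intro conjI ballI)
  show "c v \<in> {1, 2}" if "v \<in> V" for v
    using col that unfolding two_dicolouring_def by blast
next
  fix i :: nat assume "i \<in> {1, 2}"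
  let ?C = "{v \<in> V. c v = i}"
  have acyc: "acyclic (induced_arcs A ?C)"
    using col \<open>i \<in> {1, 2}\<close> unfolding two_dicolouring_def by blast
  show "acyclic (induced_arcs (insert (x, z) A) ?C)"
  proof (cases "c x = i")
    case True
    then have "(x, y) \<in> induced_arcs A ?C" "(y, z) \<in> induced_arcs A ?C"
      using assms by (auto simp: induced_arcs_def)
    then have "(x, z) \<in> (induced_arcs A ?C)\<^sup>+" by (rule r_r_into_trancl)
    then have "(z, x) \<notin> (induced_arcs A ?C)\<^sup>*"
      using acyc unfolding acyclic_def by (meson trancl_rtrancl_trancl)
    moreover have "induced_arcs (insert (x, z) A) ?C = insert (x, z) (induced_arcs A ?C)"
      using True assms by (auto simp: induced_arcs_def)
    ultimately show ?thesis using acyc by simp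
  next
    case False
    then have "induced_arcs (insert (x, z) A) ?C = induced_arcs A ?C"
      by (auto simp: induced_arcs_def)
    with acyc show ?thesis by simp
  qed
qed

lemma three_dicritical_no_transitive_triangle:
  assumes crit: "three_dicritical V A" and dig: "digraph V A"
    and "r \<in> V" "x \<in> V" "y \<in> V" "z \<in> V"
    and "digon A r x" "digon A r y" "digon A r z" "(x, y) \<in> A" "(y, z) \<in> A"
  shows "(x, z) \<notin> A"
proof
  assume xz: "(x, z) \<in> A"
  let ?A = "A - {(x, z)}"
  have "subdigraph V ?A V A" "(V, ?A) \<noteq> (V, A)"
    using dig xz unfolding subdigraph_def digraph_def by auto
  then obtain c where col: "two_dicolouring V ?A c"
    using crit unfolding three_dicritical_def two_dicolourable_def by blast
  have loopless: "\<And>v. (v, v) \<notin> A"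
    using dig unfolding digraph_def by blast
  have "digon ?A r x" "digon ?A r y" "digon ?A r z" "(x, y) \<in> ?A" "(y, z) \<in> ?A"
    using assms(7-11) loopless by (metis Diff_iff prod.inject singletonD)+
  then have "c y = c x" "c z = c x"
    using two_dicolouring_digon_neighbours[OF col] assms(3-6) by metis+
  then have "two_dicolouring V (insert (x, z) ?A) c"
    using two_dicolouring_insert_shortcut[OF col \<open>(x, y) \<in> ?A\<close> \<open>(y, z) \<in> ?A\<close> assms(4-6)]
    by blast
  moreover have "insert (x, z) ?A = A" using xz by blast
  ultimately show False
    using crit unfolding three_dicritical_def two_dicolourable_def by auto
qed

lemma three_dicritical_semicomplete_cyclic_triangle:
  assumes crit: "three_dicritical V A" and dig: "digraph V A" and sc: "semicomplete V A"
    and V: "r \<in> V" "x \<in> V" "y \<in> V" "z \<in> V" and "x \<noteq> z" "y \<noteq> z"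
    and star: "digon A r x" "digon A r y" "digon A r z" and xy: "(x, y) \<in> A"
  shows "(y, z) \<in> A \<and> (z, x) \<in> A"
proof -
  have no_transitive: "(u, w) \<notin> A"
    if "u \<in> {x, y, z}" "v \<in> {x, y, z}" "w \<in> {x, y, z}" "(u, v) \<in> A" "(v, w) \<in> A" for u v w
    using three_dicritical_no_transitive_triangle[OF crit dig \<open>r \<in> V\<close>, of u v w] that V star
    by blast
  have "(y, z) \<in> A \<or> (z, y) \<in> A" "(x, z) \<in> A \<or> (z, x) \<in> A"
    using sc V \<open>x \<noteq> z\<close> \<open>y \<noteq> z\<close> unfolding semicomplete_def by blast+
  then show ?thesis
    using no_transitive[of x y z] no_transitive[of x z y] no_transitive[of z x y] xy by auto
qed

lemma contains_S4E:
  assumes "contains_subdigraph V A S4_V S4_A"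
  obtains r a b c where "r \<in> V" "a \<in> V" "b \<in> V" "c \<in> V" "a \<noteq> b" "b \<noteq> c" "a \<noteq> c"
    and "digon A r a" "digon A r b" "digon A r c"
proof -
  obtain f where "inj_on f S4_V" "f ` S4_V \<subseteq> V" "\<forall>(x, y)\<in>S4_A. (f x, f y) \<in> A"
    using assms unfolding contains_subdigraph_def by blast
  then show thesis
    by (intro that[of "f 0" "f 1" "f 2" "f 3"]) (auto simp: S4_V_def S4_A_def inj_on_def)
qed

lemma contains_W3I:
  assumes "digraph V A" and "r \<in> V" "x \<in> V" "y \<in> V" "z \<in> V"
    and "digon A r x" "digon A r y" "digon A r z" "(x, y) \<in> A" "(y, z) \<in> A" "(z, x) \<in> A"
  shows "contains_subdigraph V A W3_V W3_A"
proof -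
  have "(v, v) \<notin> A" for v using \<open>digraph V A\<close> unfolding digraph_def by blast
  with assms show ?thesis
    unfolding contains_subdigraph_def
    by (intro exI[of _ "(!) [r, x, y, z]"]) (auto simp: W3_V_def W3_A_def inj_on_def)
qed

lemma not_two_dicolourable_W3: "\<not> two_dicolourable W3_V W3_A"
proof
  assume "two_dicolourable W3_V W3_A"
  then obtain c where col: "two_dicolouring W3_V W3_A c"
    unfolding two_dicolourable_def by blast
  have "c 2 = c 1" "c 3 = c 1"
    using two_dicolouring_digon_neighbours[OF col, of 0] by (simp_all add: W3_V_def W3_A_def)
  let ?R = "induced_arcs W3_A {w \<in> W3_V. c w = c 1}"
  have "(1, 2) \<in> ?R" "(2, 3) \<in> ?R" "(3, 1) \<in> ?R"
    using \<open>c 2 = c 1\<close> \<open>c 3 = c 1\<close> by (simp_all add: induced_arcs_def W3_V_def W3_A_def)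
  then have "(1, 1) \<in> ?R\<^sup>+"
    by (meson trancl.trancl_into_trancl r_r_into_trancl)
  with two_dicolouring_class_acyclic[OF col, of 1] show False
    unfolding acyclic_def by (simp add: W3_V_def)
qed

lemma two_dicolourable_W3_minus_arc:
  assumes "e \<in> W3_A"
  shows "two_dicolourable W3_V (W3_A - {e})"
proof -
  have ranked: "two_dicolourable W3_V (W3_A - {e})"
    if "\<forall>v\<in>W3_V. cs ! v \<in> {1, 2}" and "\<forall>(u, v)\<in>W3_A - {e}. cs ! u = cs ! v \<longrightarrow> hs ! u < hs ! v"
    for cs hs :: "nat list"
    using two_dicolourable_if_ranked[OF that] .
  from assms consider "e = (1, 2)" | "e = (2, 3)" | "e = (3, 1)"
    | "e = (0, 1)" | "e = (0, 2)" | "e = (0, 3)" | "e = (1, 0)" | "e = (2, 0)" | "e = (3, 0)"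
    unfolding W3_A_def by blast
  then show ?thesis
  proof cases
    case 1 show ?thesis by (rule ranked[of "[1, 2, 2, 2]" "[0, 2, 0, 1]"]) (auto simp: 1 W3_V_def W3_A_def)
  next
    case 2 show ?thesis by (rule ranked[of "[1, 2, 2, 2]" "[0, 1, 2, 0]"]) (auto simp: 2 W3_V_def W3_A_def)
  next
    case 3 show ?thesis by (rule ranked[of "[1, 2, 2, 2]" "[0, 0, 1, 2]"]) (auto simp: 3 W3_V_def W3_A_def)
  next
    case 4 show ?thesis by (rule ranked[of "[1, 1, 2, 2]" "[1, 0, 0, 1]"]) (auto simp: 4 W3_V_def W3_A_def)
  next
    case 5 show ?thesis by (rule ranked[of "[1, 2, 1, 2]" "[1, 1, 0, 0]"]) (auto simp: 5 W3_V_def W3_A_def)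
  next
    case 6 show ?thesis by (rule ranked[of "[1, 2, 2, 1]" "[1, 0, 1, 0]"]) (auto simp: 6 W3_V_def W3_A_def)
  next
    case 7 show ?thesis by (rule ranked[of "[1, 1, 2, 2]" "[0, 1, 0, 1]"]) (auto simp: 7 W3_V_def W3_A_def)
  next
    case 8 show ?thesis by (rule ranked[of "[1, 2, 1, 2]" "[0, 1, 1, 0]"]) (auto simp: 8 W3_V_def W3_A_def)
  next
    case 9 show ?thesis by (rule ranked[of "[1, 2, 2, 1]" "[0, 0, 1, 1]"]) (auto simp: 9 W3_V_def W3_A_def)
  qed
qed

lemma three_dicritical_W3: "three_dicritical W3_V W3_A"
  unfolding three_dicritical_def
proof (intro conjI allI impI)
  show "\<not> two_dicolourable W3_V W3_A" by (rule not_two_dicolourable_W3)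
next
  fix V' A' assume "subdigraph V' A' W3_V W3_A \<and> (V', A') \<noteq> (W3_V, W3_A)"
  then have sub: "V' \<subseteq> W3_V" "A' \<subseteq> W3_A" "A' \<subseteq> V' \<times> V'" and proper: "(V', A') \<noteq> (W3_V, W3_A)"
    unfolding subdigraph_def by auto
  obtain e where "e \<in> W3_A" "e \<notin> A'"
  proof (cases "A' = W3_A")
    case True
    have "W3_V = Domain W3_A" by (auto simp: W3_V_def W3_A_def)
    then have "V' = W3_V" using True sub by blast
    with True proper show ?thesis by blast
  qed (use sub in blast)
  then have "subdigraph V' A' W3_V (W3_A - {e})"
    using sub unfolding subdigraph_def by blast
  then show "two_dicolourable V' A'"
    using two_dicolourable_subdigraph two_dicolourable_W3_minus_arc[OF \<open>e \<in> W3_A\<close>] by blast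
qed

lemma three_dicritical_semicomplete_contains_W3:
  assumes crit: "three_dicritical V A" and dig: "digraph V A" and sc: "semicomplete V A"
    and "contains_subdigraph V A S4_V S4_A"
  shows "contains_subdigraph V A W3_V W3_A"
proof -
  obtain r a b c where V: "r \<in> V" "a \<in> V" "b \<in> V" "c \<in> V" and "a \<noteq> b" "b \<noteq> c" "a \<noteq> c"
    and star: "digon A r a" "digon A r b" "digon A r c"
    using contains_S4E[OF assms(4)] by blast
  note cyclic = three_dicritical_semicomplete_cyclic_triangle[OF crit dig sc]
  show ?thesis
  proof (cases "(a, b) \<in> A")
    case True
    then have "(b, c) \<in> A" "(c, a) \<in> A"
      using cyclic[of r a b c] V star \<open>a \<noteq> c\<close> \<open>b \<noteq> c\<close> by blast+
    then show ?thesis using contains_W3I[OF dig] V star True by blast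
  next
    case False
    then have "(b, a) \<in> A"
      using sc V \<open>a \<noteq> b\<close> unfolding semicomplete_def by blast
    then have "(a, c) \<in> A" "(c, b) \<in> A"
      using cyclic[of r b a c] V star \<open>a \<noteq> c\<close> \<open>b \<noteq> c\<close> by blast+
    then show ?thesis using contains_W3I[OF dig] V star \<open>(b, a) \<in> A\<close> by blast
  qed
qed

theorem lemma20:
  fixes V :: "'a set" and A :: "('a \<times> 'a) set"
  assumes "digraph V A"
    and "semicomplete V A"
    and "contains_subdigraph V A S4_V S4_A"
  shows "three_dicritical V A \<longleftrightarrow> isomorphic V A W3_V W3_A"
proof -
  have "A \<subseteq> V \<times> V" using assms(1) unfolding digraph_def by blast
  have W3_arcs: "W3_A \<subseteq> W3_V \<times> W3_V" by (auto simp: W3_V_def W3_A_def)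
  show ?thesis
  proof
    assume crit: "three_dicritical V A"
    then have "contains_subdigraph V A W3_V W3_A"
      using three_dicritical_semicomplete_contains_W3 assms by blast
    then show "isomorphic V A W3_V W3_A"
      by (rule three_dicritical_isomorphic_if_contains[OF crit _ not_two_dicolourable_W3 W3_arcs])
  next
    assume "isomorphic V A W3_V W3_A"
    then show "three_dicritical V A"
      by (rule three_dicritical_isomorphic[OF _ \<open>A \<subseteq> V \<times> V\<close> W3_arcs three_dicritical_W3])
  qed
qed

end
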